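(* Let $X$ be a real-valued light-tailed random variable with $0<E(X)<\infty$, let $(X_i)_{i\ge1}$ be IID with the law of $X$, let $N$ be a heavy-tailed random variable with values in $\{1,2,3,\dots\}$ independent of $(X_i)$ with $E(N^{1+\delta})<\infty$ for some $\delta>0$, and put $S_N=\sum_{k=1}^N X_k$. If $h$ is a natural scale of $E(X)N$ with $h(x)\ge(1+\delta)\log x$ for all large $x$, then $h$ is a natural scale of $S_N$.
   Context: $R_Y(x):=-\log P(Y>x)$. $Y$ is heavy-tailed if $E(e^{sY})=\infty$ for all $s>0$, light-tailed otherwise. A natural scale of a heavy-tailed $Y$ is a concave $h:[0,\infty)\to[0,\infty)$ with $h(0)=0$, $h(x)\to\infty$, and $\liminf_{x\to\infty}R_Y(x)/h(x)=1$. *)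

theory Defs
  imports "HOL-Probability.Probability"
begin

definition tail_exponent :: "'a measure \<Rightarrow> ('a \<Rightarrow> real) \<Rightarrow> real \<Rightarrow> real" where
  "tail_exponent M Y x = - ln (measure M {\<omega> \<in> space M. Y \<omega> > x})"

definition heavy_tailed :: "'a measure \<Rightarrow> ('a \<Rightarrow> real) \<Rightarrow> bool" where
  "heavy_tailed M Y \<longleftrightarrow> (\<forall>s>0. (\<integral>\<^sup>+ \<omega>. ennreal (exp (s * Y \<omega>)) \<partial>M) = \<infinity>)"

definition light_tailed :: "'a measure \<Rightarrow> ('a \<Rightarrow> real) \<Rightarrow> bool" where
  "light_tailed M Y \<longleftrightarrow> \<not> heavy_tailed M Y"

definition natural_scale :: "'a measure \<Rightarrow> ('a \<Rightarrow> real) \<Rightarrow> (real \<Rightarrow> real) \<Rightarrow> bool" where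
  "natural_scale M Y h \<longleftrightarrow>
     heavy_tailed M Y \<and>
     concave_on {0..} h \<and> h 0 = 0 \<and> (\<forall>x\<ge>0. h x \<ge> 0) \<and>
     filterlim h at_top at_top \<and>
     Liminf at_top (\<lambda>x. ereal (tail_exponent M Y x / h x)) = 1"

end

theory Submission
  imports Defs "HOL-Real_Asymp.Real_Asymp"
begin

(* We
   show that h is a natural scale of S by comparing the tails of S and mu*N:

   (1) for every e > 0 some c > 0 has P(S > x) >= c P(mu*N > (1+e)x): each partial sum T_n
       exceeds n mu/(1+e) with probability bounded below uniformly in n (a second-moment
       argument), and N is independent of the summands;
   (2) for every e in (0,1) some c > 0 has P(S > x) <= P(mu*N > (1-e)x) + exp(-cx) for large x:
       a union bound over n <= (1-e)x/mu together with Chernoff's bound for the T_n;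
   (3) a natural scale of a heavy-tailed variable is sublinear, h(x) = o(x), so the error term
       exp(-cx) in (2) is negligible on the scale h.

   An abstract scale-transfer lemma about tail functions turns (1)-(3) into liminf R_S/h = 1,
   and sublinearity of h then forces S to be heavy-tailed. *)

lemma Liminf_ereal_eqD:
  fixes f :: "'a \<Rightarrow> real"
  assumes lim: "Liminf F (\<lambda>x. ereal (f x)) = ereal L" and "0 < \<epsilon>"
  shows "eventually (\<lambda>x. L - \<epsilon> < f x) F" and "frequently (\<lambda>x. f x < L + \<epsilon>) F"
proof -
  have "ereal L \<le> Liminf F (\<lambda>x. ereal (f x))" using lim by simp
  then have "\<forall>y<ereal L. eventually (\<lambda>x. y < ereal (f x)) F" by (simp only: le_Liminf_iff)
  then show "eventually (\<lambda>x. L - \<epsilon> < f x) F" using \<open>0 < \<epsilon>\<close> by (auto elim: allE[of _ "ereal (L - \<epsilon>)"])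
  show "frequently (\<lambda>x. f x < L + \<epsilon>) F"
  proof (rule ccontr)
    assume "\<not> frequently (\<lambda>x. f x < L + \<epsilon>) F"
    then have "eventually (\<lambda>x. ereal (L + \<epsilon>) \<le> ereal (f x)) F"
      by (simp add: not_frequently not_less)
    then have "ereal (L + \<epsilon>) \<le> Liminf F (\<lambda>x. ereal (f x))" by (rule Liminf_bounded)
    with lim \<open>0 < \<epsilon>\<close> show False by simp
  qed
qed

lemma Liminf_ereal_eqI:
  fixes f :: "'a \<Rightarrow> real"
  assumes lower: "\<And>\<epsilon>. 0 < \<epsilon> \<Longrightarrow> eventually (\<lambda>x. L - \<epsilon> < f x) F"
    and upper: "\<And>\<epsilon>. 0 < \<epsilon> \<Longrightarrow> frequently (\<lambda>x. f x < L + \<epsilon>) F"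
  shows "Liminf F (\<lambda>x. ereal (f x)) = ereal L"
proof (rule antisym)
  show "ereal L \<le> Liminf F (\<lambda>x. ereal (f x))"
    unfolding le_Liminf_iff
  proof (intro allI impI)
    fix y :: ereal assume y: "y < ereal L"
    show "eventually (\<lambda>x. y < ereal (f x)) F"
    proof (cases y)
      case (real r)
      with y lower[of "L - r"] show ?thesis by (auto elim: eventually_mono)
    qed (use y in auto)
  qed
  show "Liminf F (\<lambda>x. ereal (f x)) \<le> ereal L"
  proof (rule ccontr)
    assume "\<not> Liminf F (\<lambda>x. ereal (f x)) \<le> ereal L"
    then obtain r where r: "L < r" "ereal r < Liminf F (\<lambda>x. ereal (f x))"
      using ereal_dense2[of "ereal L"] by (auto simp: not_le)
    have "Liminf F (\<lambda>x. ereal (f x)) \<le> Liminf F (\<lambda>x. ereal (f x))" by simp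
    then have "\<forall>y<Liminf F (\<lambda>x. ereal (f x)). eventually (\<lambda>x. y < ereal (f x)) F"
      by (simp only: le_Liminf_iff)
    then have "eventually (\<lambda>x. r < f x) F" using r(2) by auto
    moreover have "frequently (\<lambda>x. f x < L + (r - L)) F" using r by (intro upper) simp
    ultimately have "frequently (\<lambda>x. f x < r \<and> r < f x) F"
      by (auto intro: frequently_eventually_frequently)
    then have "frequently (\<lambda>x. False) F" by (rule frequently_elim1) auto
    then show False by simp
  qed
qed

lemma Liminf_eq_1_eventually_above:
  fixes f :: "'a \<Rightarrow> real"
  assumes "Liminf F (\<lambda>x. ereal (f x)) = 1" "0 < \<epsilon>"
  shows "eventually (\<lambda>x. 1 - \<epsilon> < f x) F"
  using Liminf_ereal_eqD(1)[of F f 1] assms by (simp add: one_ereal_def)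

lemma Liminf_eq_1_frequently_below:
  fixes f :: "'a \<Rightarrow> real"
  assumes "Liminf F (\<lambda>x. ereal (f x)) = 1" "0 < \<epsilon>"
  shows "frequently (\<lambda>x. f x < 1 + \<epsilon>) F"
  using Liminf_ereal_eqD(2)[of F f 1] assms by (simp add: one_ereal_def)

lemma Liminf_eq_1I:
  fixes f :: "'a \<Rightarrow> real"
  assumes "\<And>\<epsilon>. 0 < \<epsilon> \<Longrightarrow> eventually (\<lambda>x. 1 - \<epsilon> < f x) F"
    and "\<And>\<epsilon>. 0 < \<epsilon> \<Longrightarrow> frequently (\<lambda>x. f x < 1 + \<epsilon>) F"
  shows "Liminf F (\<lambda>x. ereal (f x)) = 1"
  using Liminf_ereal_eqI[of 1 f F] assms by (simp add: one_ereal_def)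

lemma concave_scale_shrink:
  fixes h :: "real \<Rightarrow> real"
  assumes "concave_on {0..} h" "h 0 = 0" "0 \<le> t" "t \<le> 1" "0 \<le> x"
  shows "t * h x \<le> h (t * x)"
  using concave_onD[OF assms(1) assms(3,4), of 0 x] assms(2,5) by simp

lemma concave_scale_stretch:
  fixes h :: "real \<Rightarrow> real"
  assumes "concave_on {0..} h" "h 0 = 0" "1 \<le> l" "0 \<le> x"
  shows "h (l * x) \<le> l * h x"
proof -
  have "(1 / l) * h (l * x) \<le> h ((1 / l) * (l * x))"
    using assms by (intro concave_scale_shrink) auto
  with assms(3) show ?thesis by (simp add: field_simps)
qed

lemma concave_scale_linear_lower:
  fixes h :: "real \<Rightarrow> real"
  assumes "concave_on {0..} h" "h 0 = 0" "frequently (\<lambda>y. c * y < h y) at_top" "0 < x"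
  shows "c * x \<le> h x"
proof -
  have "frequently (\<lambda>y. c * y < h y \<and> x \<le> y) at_top"
    using assms(3) by (rule frequently_eventually_frequently) simp
  then obtain y where y: "c * y < h y" "x \<le> y" by (auto dest: frequently_ex)
  with assms(4) have "0 < y" by simp
  have "(x / y) * (c * y) \<le> (x / y) * h y"
    using y \<open>0 < y\<close> assms(4) by (intro mult_left_mono) auto
  also have "\<dots> \<le> h ((x / y) * y)"
    using assms(1,2,4) y \<open>0 < y\<close> by (intro concave_scale_shrink) auto
  finally show ?thesis using \<open>0 < y\<close> by (simp add: mult.commute)
qed

lemma le_exp_of_less_neg_ln:
  fixes p r :: real
  assumes "0 \<le> p" "r < - ln p"
  shows "p \<le> exp (- r)"
proof (cases "p = 0")
  case False
  with assms have "exp (ln p) < exp (- r)" by (subst exp_less_cancel_iff) linarith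
  with assms(1) False show ?thesis by simp
qed simp

lemma tail_le_exp_of_exponent:
  assumes "r < tail_exponent M Y x"
  shows "measure M {\<omega> \<in> space M. Y \<omega> > x} \<le> exp (- r)"
  using le_exp_of_less_neg_ln[OF measure_nonneg assms[unfolded tail_exponent_def]] .

context prob_space
begin

lemma tail_pos_of_heavy:
  assumes [measurable]: "Y \<in> borel_measurable M" and heavy: "heavy_tailed M Y"
  shows "prob {\<omega> \<in> space M. Y \<omega> > y} > 0"
proof (rule ccontr)
  assume "\<not> prob {\<omega> \<in> space M. Y \<omega> > y} > 0"
  then have "prob {\<omega> \<in> space M. Y \<omega> > y} = 0"
    using measure_nonneg[of M "{\<omega> \<in> space M. Y \<omega> > y}"] by linarith
  then have "AE \<omega> in M. Y \<omega> \<le> y" by (subst (asm) prob_Collect_eq_0) (auto simp: not_less)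
  then have "(\<integral>\<^sup>+\<omega>. ennreal (exp (1 * Y \<omega>)) \<partial>M) \<le> (\<integral>\<^sup>+\<omega>. ennreal (exp y) \<partial>M)"
    by (intro nn_integral_mono_AE) auto
  also have "\<dots> < \<infinity>" by (simp add: emeasure_space_1)
  finally have "(\<integral>\<^sup>+\<omega>. ennreal (exp (1 * Y \<omega>)) \<partial>M) < \<infinity>" .
  moreover have "(\<integral>\<^sup>+\<omega>. ennreal (exp (1 * Y \<omega>)) \<partial>M) = \<infinity>"
    using heavy zero_less_one unfolding heavy_tailed_def by blast
  ultimately show False by simp
qed

lemma tail_le_mgf:
  assumes [measurable]: "Y \<in> borel_measurable M" and "s > 0"
    and mgf: "(\<integral>\<^sup>+\<omega>. ennreal (exp (s * Y \<omega>)) \<partial>M) = ennreal C" and "0 \<le> C"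
  shows "prob {\<omega> \<in> space M. Y \<omega> > x} \<le> exp (- s * x) * C"
proof -
  have "emeasure M {\<omega> \<in> space M. Y \<omega> > x} \<le> emeasure M {\<omega> \<in> space M. Y \<omega> \<ge> x}"
    by (intro emeasure_mono) auto
  also have "\<dots> \<le> ennreal (exp (- s * x)) * (\<integral>\<^sup>+\<omega>. ennreal (exp (s * Y \<omega>)) * indicator (space M) \<omega> \<partial>M)"
    by (intro Chernoff_ineq_nn_integral_ge \<open>s > 0\<close>) auto
  also have "(\<integral>\<^sup>+\<omega>. ennreal (exp (s * Y \<omega>)) * indicator (space M) \<omega> \<partial>M) = ennreal C"
    by (subst mgf[symmetric], intro nn_integral_cong) simp
  finally show ?thesis using \<open>0 \<le> C\<close> by (simp add: emeasure_eq_measure ennreal_mult[symmetric])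
qed

lemma tail_exponent_ge_of_mgf:
  assumes [measurable]: "Y \<in> borel_measurable M" and s: "s > 0"
    and mgf: "(\<integral>\<^sup>+\<omega>. ennreal (exp (s * Y \<omega>)) \<partial>M) = ennreal C" "0 \<le> C"
    and R: "0 < tail_exponent M Y x"
  shows "s * x - ln C \<le> tail_exponent M Y x"
proof -
  let ?p = "prob {\<omega> \<in> space M. Y \<omega> > x}"
  have p: "0 < ?p" using R by (auto simp: tail_exponent_def zero_less_measure_iff)
  have markov: "?p \<le> exp (- s * x) * C" by (rule tail_le_mgf[OF assms(1) s mgf])
  with p have "0 < exp (- s * x) * C" by linarith
  then have "0 < C" by (simp add: zero_less_mult_iff)
  with markov p have "ln ?p \<le> - s * x + ln C" by (simp add: ln_le_cancel_iff[symmetric] ln_mult_pos)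
  then show ?thesis by (simp add: tail_exponent_def)
qed

lemma exp_moment_le_layers:
  assumes [measurable]: "Y \<in> borel_measurable M" and s: "s > 0"
  shows "(\<integral>\<^sup>+\<omega>. ennreal (exp (s * Y \<omega>)) \<partial>M) \<le> ennreal (exp (s * real n0))
    + (\<Sum>n. ennreal (exp (s * (real n + 1))) * emeasure M {\<omega> \<in> space M. n0 \<le> n \<and> real n < Y \<omega>})"
proof -
  define D where "D n = {\<omega> \<in> space M. n0 \<le> n \<and> real n < Y \<omega>}" for n
  define g where "g n \<omega> = ennreal (exp (s * (real n + 1))) * indicator (D n) \<omega>" for n \<omega>
  have D_sets[measurable]: "D n \<in> events" for n unfolding D_def by measurable
  have g_meas: "g n \<in> borel_measurable M" for n unfolding g_def by measurable
  have dominate: "ennreal (exp (s * Y \<omega>)) \<le> ennreal (exp (s * real n0)) + (\<Sum>n. g n \<omega>)"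
    if "\<omega> \<in> space M" for \<omega>
  proof (cases "Y \<omega> \<le> real n0")
    case True
    then have "ennreal (exp (s * Y \<omega>)) \<le> ennreal (exp (s * real n0))" using s by simp
    then show ?thesis by (rule add_increasing2[rotated]) simp
  next
    case False
    define n where "n = nat \<lceil>Y \<omega>\<rceil> - 1"
    have n: "n0 \<le> n" "real n < Y \<omega>" "Y \<omega> \<le> real n + 1"
      using False by (auto simp: n_def) linarith+
    then have "ennreal (exp (s * Y \<omega>)) \<le> g n \<omega>"
      using s that by (simp add: g_def D_def)
    also have "\<dots> \<le> (\<Sum>n. g n \<omega>)" using sum_le_suminf[of "\<lambda>n. g n \<omega>" "{n}"] by simp
    finally show ?thesis by (rule add_increasing[rotated]) simp
  qed
  have "(\<integral>\<^sup>+\<omega>. ennreal (exp (s * Y \<omega>)) \<partial>M) \<le> (\<integral>\<^sup>+\<omega>. ennreal (exp (s * real n0)) + (\<Sum>n. g n \<omega>) \<partial>M)"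
    by (rule nn_integral_mono) (rule dominate)
  also have "\<dots> = ennreal (exp (s * real n0)) + (\<Sum>n. \<integral>\<^sup>+\<omega>. g n \<omega> \<partial>M)"
    by (simp add: nn_integral_add borel_measurable_suminf_order g_meas nn_integral_suminf emeasure_space_1)
  also have "(\<lambda>n. \<integral>\<^sup>+\<omega>. g n \<omega> \<partial>M) = (\<lambda>n. ennreal (exp (s * (real n + 1))) * emeasure M (D n))"
    by (simp add: g_def nn_integral_cmult_indicator)
  finally show ?thesis unfolding D_def .
qed

text \<open>Conversely to Markov's inequality, a tail decaying like exp(-2 s x) gives a finite
  exponential moment of order s: the layers above form a convergent geometric series.\<close>
lemma exp_tail_imp_finite_mgf:
  assumes [measurable]: "Y \<in> borel_measurable M" and s: "s > 0"
    and tail: "eventually (\<lambda>x. prob {\<omega> \<in> space M. Y \<omega> > x} \<le> exp (- 2 * s * x)) at_top"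
  shows "(\<integral>\<^sup>+\<omega>. ennreal (exp (s * Y \<omega>)) \<partial>M) < \<infinity>"
proof -
  obtain x0 where x0: "\<And>x. x0 \<le> x \<Longrightarrow> prob {\<omega> \<in> space M. Y \<omega> > x} \<le> exp (- 2 * s * x)"
    using tail by (auto simp: eventually_at_top_linorder)
  define n0 where "n0 = nat \<lceil>x0\<rceil>"
  have layer: "ennreal (exp (s * (real n + 1))) * emeasure M {\<omega> \<in> space M. n0 \<le> n \<and> real n < Y \<omega>}
      \<le> ennreal (exp s * exp (- s) ^ n)" for n
  proof (cases "n0 \<le> n")
    case True
    have "x0 \<le> real n" using True by (simp add: n0_def)
    then have "prob {\<omega> \<in> space M. n0 \<le> n \<and> real n < Y \<omega>} \<le> exp (- 2 * s * real n)"
      using x0[of "real n"] True by simp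
    then have "exp (s * (real n + 1)) * prob {\<omega> \<in> space M. n0 \<le> n \<and> real n < Y \<omega>}
        \<le> exp (s * (real n + 1)) * exp (- 2 * s * real n)"
      by (intro mult_left_mono) auto
    also have "\<dots> = exp s * exp (- s) ^ n"
      by (simp add: exp_add[symmetric] exp_of_nat_mult[symmetric] algebra_simps)
    finally show ?thesis by (simp add: emeasure_eq_measure ennreal_mult[symmetric])
  qed simp
  have "(\<integral>\<^sup>+\<omega>. ennreal (exp (s * Y \<omega>)) \<partial>M) \<le> ennreal (exp (s * real n0))
      + (\<Sum>n. ennreal (exp (s * (real n + 1))) * emeasure M {\<omega> \<in> space M. n0 \<le> n \<and> real n < Y \<omega>})"
    by (rule exp_moment_le_layers[OF assms(1) s])
  also have "\<dots> \<le> ennreal (exp (s * real n0)) + (\<Sum>n. ennreal (exp s * exp (- s) ^ n))"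
    by (intro add_left_mono suminf_le layer summableI)
  also have "\<dots> < \<infinity>"
    using s by (simp add: ennreal_suminf_neq_top summable_mult summable_geometric less_top[symmetric])
  finally show ?thesis .
qed

end

lemma le_quadratic_plus_const:
  fixes t y :: real
  assumes "t > 0"
  shows "y \<le> t * y\<^sup>2 + 1 / (4 * t)"
proof -
  have "0 \<le> (2 * t * y - 1)\<^sup>2" by simp
  then have "4 * t * y \<le> 4 * t * (t * y\<^sup>2 + 1 / (4 * t))"
    using assms by (simp add: algebra_simps power2_eq_square)
  then show ?thesis using assms by simp
qed

lemma pos_part_square_le_exp:
  fixes s y :: real
  assumes "s > 0"
  shows "(max 0 y)\<^sup>2 \<le> 4 / s\<^sup>2 * exp (s * y)"
proof (cases "y \<le> 0")
  case False
  let ?z = "s * y / 2"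
  have "0 \<le> ?z" using False assms by simp
  moreover have "?z \<le> exp ?z" using exp_ge_add_one_self[of ?z] by linarith
  ultimately have "?z\<^sup>2 \<le> (exp ?z)\<^sup>2" by (intro power_mono) auto
  also have "(exp ?z)\<^sup>2 = exp (s * y)" by (simp add: power2_eq_square exp_add[symmetric])
  finally have "s\<^sup>2 * y\<^sup>2 \<le> 4 * exp (s * y)" by (simp add: power_divide power_mult_distrib)
  then show ?thesis using False assms by (simp add: max_def field_simps)
qed simp

text \<open>The difference quotient (exp(s y) - 1)/s, for 0 < s \<le> s0/2, is dominated uniformly in s
  by an integrable function of y when exp(s0 y) is integrable.\<close>
lemma exp_difference_quotient_bound:
  fixes s s0 y :: real
  assumes s: "0 < s" "s \<le> s0 / 2"
  shows "\<bar>(exp (s * y) - 1) / s\<bar> \<le> \<bar>y\<bar> + 2 / s0 * exp (s0 * y)"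
proof (cases "y \<ge> 0")
  case True
  let ?u = "s * y"
  have s0: "s0 > 0" using s by simp
  have "(1 - ?u) * exp ?u \<le> exp (- ?u) * exp ?u"
    using exp_ge_add_one_self[of "- ?u"] by (intro mult_right_mono) auto
  then have "exp ?u - 1 \<le> ?u * exp ?u" by (simp add: exp_minus field_simps)
  then have "(exp ?u - 1) / s \<le> y * exp ?u" using s by (simp add: divide_le_eq mult_ac)
  also have "\<dots> \<le> y * exp (s0 * y / 2)"
    using True mult_right_mono[OF s(2) True] by (intro mult_left_mono) auto
  also have "\<dots> \<le> (2 / s0 * exp (s0 * y / 2)) * exp (s0 * y / 2)"
  proof (intro mult_right_mono)
    have "s0 * y / 2 \<le> exp (s0 * y / 2)" by (rule order_trans[OF _ exp_ge_add_one_self]) simp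
    then show "y \<le> 2 / s0 * exp (s0 * y / 2)" using s0 by (simp add: field_simps)
  qed simp
  also have "\<dots> = 2 / s0 * exp (s0 * y)" by (simp add: exp_add[symmetric])
  finally have "(exp ?u - 1) / s \<le> 2 / s0 * exp (s0 * y)" .
  moreover have "0 \<le> (exp ?u - 1) / s" using True s by simp
  ultimately show ?thesis using True by simp
next
  case False
  then have "s * y \<le> 0" using s by (simp add: mult_nonneg_nonpos)
  then have "exp (s * y) \<le> 1" by simp
  moreover have "1 + s * y \<le> exp (s * y)" by (rule exp_ge_add_one_self)
  ultimately have "\<bar>exp (s * y) - 1\<bar> \<le> - (s * y)" unfolding abs_le_iff by linarith
  have "\<bar>(exp (s * y) - 1) / s\<bar> = \<bar>exp (s * y) - 1\<bar> / s" using s by simp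
  also have "\<dots> \<le> - (s * y) / s" using \<open>\<bar>exp (s * y) - 1\<bar> \<le> - (s * y)\<close> s by (intro divide_right_mono) auto
  also have "\<dots> = - y" using s by simp
  finally have "\<bar>(exp (s * y) - 1) / s\<bar> \<le> - y" .
  moreover have "0 \<le> 2 / s0 * exp (s0 * y)" using s by simp
  ultimately show ?thesis using False by simp
qed

lemma sum_le_threshold_plus_squares:
  fixes z :: "'i \<Rightarrow> real"
  assumes "0 \<le> a" "0 < t"
  shows "(\<Sum>i\<in>I. z i) \<le> real (card I) * a + t * (\<Sum>i\<in>I. (max 0 (z i))\<^sup>2)
    + real (card I) / (4 * t) * (if real (card I) * a < (\<Sum>i\<in>I. z i) then 1 else 0)"
proof (cases "real (card I) * a < (\<Sum>i\<in>I. z i)")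
  case False
  have "0 \<le> t * (\<Sum>i\<in>I. (max 0 (z i))\<^sup>2)" using assms by (simp add: sum_nonneg)
  with False show ?thesis by simp
next
  case True
  have "(\<Sum>i\<in>I. z i) \<le> (\<Sum>i\<in>I. t * (max 0 (z i))\<^sup>2 + 1 / (4 * t))"
    by (intro sum_mono order_trans[OF max.cobounded2 le_quadratic_plus_const[OF assms(2)]])
  also have "\<dots> = t * (\<Sum>i\<in>I. (max 0 (z i))\<^sup>2) + real (card I) / (4 * t)"
    by (simp add: sum.distrib sum_distrib_left)
  finally have "(\<Sum>i\<in>I. z i) \<le> t * (\<Sum>i\<in>I. (max 0 (z i))\<^sup>2) + real (card I) / (4 * t)" .
  moreover have "0 \<le> real (card I) * a" using assms by simp
  moreover have "real (card I) / (4 * t) * (if real (card I) * a < (\<Sum>i\<in>I. z i) then 1 else 0)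
      = real (card I) / (4 * t)" using True by simp
  ultimately show ?thesis by linarith
qed

context prob_space
begin

lemma light_tailed_exp_integrable:
  assumes [measurable]: "X \<in> borel_measurable M" and "light_tailed M X"
  obtains s0 where "s0 > 0" "integrable M (\<lambda>\<omega>. exp (s0 * X \<omega>))"
proof -
  from assms(2) obtain s0 where s0: "s0 > 0" "(\<integral>\<^sup>+\<omega>. ennreal (exp (s0 * X \<omega>)) \<partial>M) \<noteq> \<infinity>"
    unfolding light_tailed_def heavy_tailed_def by auto
  have "integrable M (\<lambda>\<omega>. exp (s0 * X \<omega>))"
    by (rule integrableI_nonneg) (use s0 in \<open>auto simp: less_top\<close>)
  with s0 that show ?thesis by blast
qed

lemma exp_integrable_smaller_order:
  fixes s s0 :: real
  assumes [measurable]: "X \<in> borel_measurable M"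
    and int: "integrable M (\<lambda>\<omega>. exp (s0 * X \<omega>))" and s: "0 \<le> s" "s \<le> s0"
  shows "integrable M (\<lambda>\<omega>. exp (s * X \<omega>))"
proof (rule Bochner_Integration.integrable_bound)
  show "integrable M (\<lambda>\<omega>. 1 + exp (s0 * X \<omega>))" using int by simp
  have "exp (s * y) \<le> 1 + exp (s0 * y)" for y :: real
  proof (cases "y \<ge> 0")
    case True
    then have "exp (s * y) \<le> exp (s0 * y)" using s by (simp add: mult_right_mono)
    then show ?thesis by linarith
  next
    case False
    then have "exp (s * y) \<le> 1" using s by (simp add: mult_nonneg_nonpos)
    then show ?thesis using exp_gt_zero[of "s0 * y"] by linarith
  qed
  then show "AE \<omega> in M. norm (exp (s * X \<omega>)) \<le> norm (1 + exp (s0 * X \<omega>))"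
    by (intro AE_I2) simp
qed simp

lemma light_tailed_pos_part_square_integrable:
  assumes [measurable]: "X \<in> borel_measurable M" and "light_tailed M X"
  shows "integrable M (\<lambda>\<omega>. (max 0 (X \<omega>))\<^sup>2)"
proof -
  obtain s0 where s0: "s0 > 0" "integrable M (\<lambda>\<omega>. exp (s0 * X \<omega>))"
    using assms by (rule light_tailed_exp_integrable)
  show ?thesis
  proof (rule Bochner_Integration.integrable_bound)
    show "integrable M (\<lambda>\<omega>. 4 / s0\<^sup>2 * exp (s0 * X \<omega>))" using s0 by simp
    show "AE \<omega> in M. norm ((max 0 (X \<omega>))\<^sup>2) \<le> norm (4 / s0\<^sup>2 * exp (s0 * X \<omega>))"
      using pos_part_square_le_exp[OF s0(1)] by (intro AE_I2) simp
  qed simp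
qed

text \<open>The moment generating function of a light-tailed X satisfies E exp(sX) = 1 + s E X + o(s)
  as s \<down> 0 (dominated convergence of the difference quotients); hence for every b > E X some
  s > 0 has E exp(sX) \<le> exp(s b).\<close>
lemma light_tailed_mgf_below:
  assumes [measurable]: "X \<in> borel_measurable M" and light: "light_tailed M X"
    and int: "integrable M X" and b: "expectation X < b"
  obtains s where "s > 0" "integrable M (\<lambda>\<omega>. exp (s * X \<omega>))"
    "expectation (\<lambda>\<omega>. exp (s * X \<omega>)) \<le> exp (s * b)"
proof -
  obtain s0 where s0: "s0 > 0" "integrable M (\<lambda>\<omega>. exp (s0 * X \<omega>))"
    using assms(1) light by (rule light_tailed_exp_integrable)
  define sk where "sk k = s0 / 2 * inverse (real (Suc k))" for k
  have sk: "0 < sk k" "sk k \<le> s0 / 2" for k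
    using s0(1) by (auto simp: sk_def field_simps)
  have sk_at: "filterlim sk (at 0) sequentially"
  proof (rule filterlim_atI)
    show "sk \<longlonglongrightarrow> 0"
      unfolding sk_def using tendsto_mult[OF tendsto_const LIMSEQ_inverse_real_of_nat, of "s0 / 2"] by simp
    have "\<forall>k. sk k \<noteq> 0" using sk(1) order_less_imp_not_eq2 by blast
    then show "eventually (\<lambda>k. sk k \<noteq> 0) sequentially" by (rule always_eventually)
  qed
  have quotient_lim: "(\<lambda>k. (exp (sk k * y) - 1) / sk k) \<longlonglongrightarrow> y" for y
  proof -
    have "((\<lambda>t. exp (t * y)) has_field_derivative exp (0 * y) * y) (at 0)"
      by (auto intro!: derivative_eq_intros)
    then have "((\<lambda>t. (exp (t * y) - 1) / t) \<longlongrightarrow> y) (at 0)"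
      unfolding has_field_derivative_iff by simp
    from filterlim_compose[OF this sk_at] show ?thesis .
  qed
  have int_k: "integrable M (\<lambda>\<omega>. exp (sk k * X \<omega>))" for k
    using sk[of k] s0 by (intro exp_integrable_smaller_order[OF _ s0(2)]) auto
  have lim: "(\<lambda>k. expectation (\<lambda>\<omega>. (exp (sk k * X \<omega>) - 1) / sk k)) \<longlonglongrightarrow> expectation X"
  proof (rule integral_dominated_convergence)
    show "integrable M (\<lambda>\<omega>. \<bar>X \<omega>\<bar> + 2 / s0 * exp (s0 * X \<omega>))" using s0 int by auto
    show "AE \<omega> in M. norm ((exp (sk k * X \<omega>) - 1) / sk k) \<le> \<bar>X \<omega>\<bar> + 2 / s0 * exp (s0 * X \<omega>)" for k
      using exp_difference_quotient_bound[OF sk[of k]] by (intro AE_I2) simp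
  qed (auto intro: quotient_lim)
  have "eventually (\<lambda>k. expectation (\<lambda>\<omega>. (exp (sk k * X \<omega>) - 1) / sk k) < b) sequentially"
    using lim b by (rule order_tendstoD(2))
  then obtain k where k: "expectation (\<lambda>\<omega>. (exp (sk k * X \<omega>) - 1) / sk k) < b"
    by (auto simp: eventually_sequentially)
  have "expectation (\<lambda>\<omega>. (exp (sk k * X \<omega>) - 1) / sk k) = (expectation (\<lambda>\<omega>. exp (sk k * X \<omega>)) - 1) / sk k"
    using int_k[of k] by (simp add: prob_space)
  with k sk[of k] have "expectation (\<lambda>\<omega>. exp (sk k * X \<omega>)) < 1 + sk k * b"
    by (simp add: divide_less_eq algebra_simps)
  also have "\<dots> \<le> exp (sk k * b)" by (rule exp_ge_add_one_self)
  finally show ?thesis using sk[of k] int_k[of k] by (intro that) auto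
qed

text \<open>A sum of n random variables with means at least \<mu> and bounded second moments of their
  positive parts exceeds n a, for a < \<mu>, with probability at least (\<mu> - a)^2 / C, uniformly in n.
  No independence is needed: if A is that event, then for every t > 0 pointwise
  \<Sum> Z_i \<le> n a + t \<Sum> (Z_i^+)^2 + n 1_A / (4t); taking expectations gives the first lemma,
  and optimising t the second.\<close>
lemma sum_mean_threshold_bound:
  fixes Z :: "'i \<Rightarrow> 'a \<Rightarrow> real"
  assumes I: "finite I" "I \<noteq> {}"
    and int: "\<And>i. i \<in> I \<Longrightarrow> integrable M (Z i)"
    and sq_int: "\<And>i. i \<in> I \<Longrightarrow> integrable M (\<lambda>\<omega>. (max 0 (Z i \<omega>))\<^sup>2)"
    and mean: "\<And>i. i \<in> I \<Longrightarrow> \<mu> \<le> expectation (Z i)"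
    and sq: "\<And>i. i \<in> I \<Longrightarrow> expectation (\<lambda>\<omega>. (max 0 (Z i \<omega>))\<^sup>2) \<le> C"
    and a: "0 \<le> a" and t: "0 < t"
  shows "\<mu> \<le> a + t * C + prob {\<omega> \<in> space M. real (card I) * a < (\<Sum>i\<in>I. Z i \<omega>)} / (4 * t)"
proof -
  define n where "n = real (card I)"
  have n: "n > 0" using I by (simp add: n_def card_gt_0_iff)
  define A where "A = {\<omega> \<in> space M. n * a < (\<Sum>i\<in>I. Z i \<omega>)}"
  define q where "q i = (\<lambda>\<omega>. (max 0 (Z i \<omega>))\<^sup>2)" for i
  have A_sets: "A \<in> events"
    unfolding A_def using int by (auto intro!: borel_measurable_sum borel_measurable_integrable)
  have pointwise: "(\<Sum>i\<in>I. Z i \<omega>) \<le> n * a + t * (\<Sum>i\<in>I. q i \<omega>) + n / (4 * t) * indicator A \<omega>"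
    if "\<omega> \<in> space M" for \<omega>
    using sum_le_threshold_plus_squares[OF a t, of "\<lambda>i. Z i \<omega>" I] that
    by (auto simp: A_def n_def q_def indicator_def split: if_splits)
  have integrable_bound: "integrable M (\<lambda>\<omega>. n * a + t * (\<Sum>i\<in>I. q i \<omega>) + n / (4 * t) * indicator A \<omega>)"
    using sq_int A_sets unfolding q_def
    by (intro Bochner_Integration.integrable_add Bochner_Integration.integrable_mult_right
        Bochner_Integration.integrable_sum integrable_real_indicator integrable_const)
      (auto simp: emeasure_eq_measure)
  have "n * \<mu> \<le> (\<Sum>i\<in>I. expectation (Z i))"
    using mean by (simp add: n_def sum_bounded_below)
  also have "\<dots> = expectation (\<lambda>\<omega>. \<Sum>i\<in>I. Z i \<omega>)"
    using int by (simp add: Bochner_Integration.integral_sum)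
  also have "\<dots> \<le> expectation (\<lambda>\<omega>. n * a + t * (\<Sum>i\<in>I. q i \<omega>) + n / (4 * t) * indicator A \<omega>)"
    using int pointwise integrable_bound by (intro integral_mono) auto
  also have "\<dots> = expectation (\<lambda>\<omega>. n * a + t * (\<Sum>i\<in>I. q i \<omega>))
      + expectation (\<lambda>\<omega>. n / (4 * t) * indicator A \<omega>)"
    using sq_int A_sets unfolding q_def
    by (intro Bochner_Integration.integral_add Bochner_Integration.integrable_add
        Bochner_Integration.integrable_mult_right Bochner_Integration.integrable_sum
        integrable_real_indicator integrable_const) (auto simp: emeasure_eq_measure)
  also have "\<dots> = n * a + t * (\<Sum>i\<in>I. expectation (q i)) + n / (4 * t) * prob A"
    using sq_int A_sets unfolding q_def
    by (simp add: Bochner_Integration.integral_sum prob_space)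
  also have "\<dots> \<le> n * a + t * (n * C) + n / (4 * t) * prob A"
    using sq t unfolding q_def n_def by (intro add_mono mult_left_mono sum_bounded_above) auto
  also have "\<dots> = n * (a + t * C + prob A / (4 * t))" by (simp add: algebra_simps)
  finally show ?thesis using n unfolding A_def n_def by (rule mult_left_le_imp_le)
qed

lemma sum_exceeds_fraction_of_mean:
  fixes Z :: "'i \<Rightarrow> 'a \<Rightarrow> real"
  assumes I: "finite I" "I \<noteq> {}"
    and int: "\<And>i. i \<in> I \<Longrightarrow> integrable M (Z i)"
    and sq_int: "\<And>i. i \<in> I \<Longrightarrow> integrable M (\<lambda>\<omega>. (max 0 (Z i \<omega>))\<^sup>2)"
    and mean: "\<And>i. i \<in> I \<Longrightarrow> \<mu> \<le> expectation (Z i)"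
    and sq: "\<And>i. i \<in> I \<Longrightarrow> expectation (\<lambda>\<omega>. (max 0 (Z i \<omega>))\<^sup>2) \<le> C"
    and a: "0 \<le> a" "a < \<mu>"
  shows "(\<mu> - a)\<^sup>2 / C \<le> prob {\<omega> \<in> space M. real (card I) * a < (\<Sum>i\<in>I. Z i \<omega>)}"
    (is "_ \<le> ?p")
proof (cases "C > 0")
  case False
  then have "(\<mu> - a)\<^sup>2 / C \<le> 0" by (simp add: divide_nonneg_nonpos)
  then show ?thesis using measure_nonneg order_trans by blast
next
  case C: True
  define t where "t = (\<mu> - a) / (2 * C)"
  have t: "t > 0" using a C by (simp add: t_def)
  have "\<mu> \<le> a + t * C + ?p / (4 * t)"
    by (rule sum_mean_threshold_bound[OF I int sq_int mean sq a(1) t])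
  then have "4 * t * (\<mu> - a) \<le> 4 * t * (t * C + ?p / (4 * t))"
    using t by (intro mult_left_mono) auto
  also have "\<dots> = 4 * t * (t * C) + ?p" using t by (simp add: distrib_left)
  finally have "4 * t * (\<mu> - a) - 4 * t * (t * C) \<le> ?p" by linarith
  moreover have "(\<mu> - a)\<^sup>2 / C = 4 * t * (\<mu> - a) - 4 * t * (t * C)"
    using C by (simp add: t_def power2_eq_square field_simps)
  ultimately show ?thesis by simp
qed

lemma indep_sum_chernoff:
  fixes Z :: "'i \<Rightarrow> 'a \<Rightarrow> real"
  assumes I: "finite I" and indep: "indep_vars (\<lambda>_. borel) Z I" and s: "s > 0"
  shows "emeasure M {\<omega> \<in> space M. x < (\<Sum>i\<in>I. Z i \<omega>)}
    \<le> ennreal (exp (- s * x)) * (\<Prod>i\<in>I. \<integral>\<^sup>+\<omega>. ennreal (exp (s * Z i \<omega>)) \<partial>M)"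
proof -
  have [measurable]: "Z i \<in> borel_measurable M" if "i \<in> I" for i
    using indep that by (auto simp: indep_vars_def)
  have "emeasure M {\<omega> \<in> space M. x < (\<Sum>i\<in>I. Z i \<omega>)} \<le> emeasure M {\<omega> \<in> space M. x \<le> (\<Sum>i\<in>I. Z i \<omega>)}"
    by (intro emeasure_mono) auto
  also have "\<dots> \<le> ennreal (exp (- s * x)) * (\<integral>\<^sup>+\<omega>. ennreal (exp (s * (\<Sum>i\<in>I. Z i \<omega>))) * indicator (space M) \<omega> \<partial>M)"
    by (intro Chernoff_ineq_nn_integral_ge s) auto
  also have "(\<integral>\<^sup>+\<omega>. ennreal (exp (s * (\<Sum>i\<in>I. Z i \<omega>))) * indicator (space M) \<omega> \<partial>M)
      = (\<integral>\<^sup>+\<omega>. (\<Prod>i\<in>I. ennreal (exp (s * Z i \<omega>))) \<partial>M)"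
    by (intro nn_integral_cong) (simp add: sum_distrib_left exp_sum I prod_ennreal)
  also have "\<dots> = (\<Prod>i\<in>I. \<integral>\<^sup>+\<omega>. ennreal (exp (s * Z i \<omega>)) \<partial>M)"
    by (intro indep_vars_nn_integral I indep_vars_compose2[OF indep]) auto
  finally show ?thesis .
qed

end

lemma frequently_compose_filterlim:
  assumes "frequently (\<lambda>y. P (g y)) F" "filterlim g G F"
  shows "frequently P G"
proof (rule ccontr)
  assume "\<not> frequently P G"
  then have "eventually (\<lambda>y. \<not> P (g y)) F"
    using eventually_compose_filterlim[OF _ assms(2)] by (simp add: not_frequently)
  with assms(1) show False by (simp add: frequently_def)
qed

lemma filterlim_at_top_cmult:
  fixes a :: real
  assumes "0 < a"
  shows "filterlim (\<lambda>x. a * x) at_top at_top"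
  using filterlim_tendsto_pos_mult_at_top[OF tendsto_const assms filterlim_ident] .

lemma tail_exponent_upper_step:
  fixes h :: "real \<Rightarrow> real"
  assumes h: "concave_on {0..} h" "h 0 = 0" "0 \<le> h x"
    and e: "0 < e" "e \<le> 1" and x: "0 \<le> x"
    and c: "0 < c" "- ln c \<le> e * h x"
    and q: "0 < q" "c * q \<le> p" "- ln q < (1 + e) * h ((1 + e) * x)"
  shows "- ln p < (1 + 4 * e) * h x"
proof -
  have "0 < c * q" using c q by simp
  then have "ln (c * q) \<le> ln p" using q by (subst ln_le_cancel_iff) auto
  moreover have "ln (c * q) = ln c + ln q" using c q by (simp add: ln_mult_pos)
  moreover have "(1 + e) * h ((1 + e) * x) \<le> (1 + e) * ((1 + e) * h x)"
    using h e x by (intro mult_left_mono concave_scale_stretch) auto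
  ultimately have "- ln p < e * h x + (1 + e) * ((1 + e) * h x)" using c q by linarith
  also have "\<dots> = (1 + 3 * e + e * e) * h x" by (simp add: algebra_simps)
  also have "\<dots> \<le> (1 + 4 * e) * h x"
  proof (rule mult_right_mono)
    have "e * e \<le> e" using e by (simp add: mult_le_cancel_left1)
    then show "1 + 3 * e + e * e \<le> 1 + 4 * e" by linarith
  qed (rule h(3))
  finally show ?thesis .
qed

text \<open>Lower estimate: if p \<le> q + exp(-c x), where q is the tail of Y at the shrunk point (1-e) x
  and R_Y((1-e) x) is above (1-e) h((1-e) x), and h(x) \<le> c x, then both terms are at most
  exp(-(1-e)^2 h(x)), so R_S(x) \<ge> (1-e)^2 h(x) - ln 2 \<ge> (1 - 3e) h(x).\<close>
lemma tail_exponent_lower_step: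
  fixes h :: "real \<Rightarrow> real"
  assumes h: "concave_on {0..} h" "h 0 = 0" "0 \<le> h x"
    and e: "0 < e" "e \<le> 1" and x: "0 \<le> x"
    and hx: "h x \<le> c * x" "ln 2 \<le> e * h x"
    and q: "0 \<le> q" "(1 - e) * h ((1 - e) * x) < - ln q"
    and p: "0 < p" "p \<le> q + exp (- c * x)"
  shows "(1 - 3 * e) * h x \<le> - ln p"
proof -
  define m where "m = (1 - e) * ((1 - e) * h x)"
  have "m \<le> (1 - e) * h ((1 - e) * x)"
    unfolding m_def using h e x by (intro mult_left_mono concave_scale_shrink) auto
  with q have q_bound: "q \<le> exp (- m)" by (intro le_exp_of_less_neg_ln) auto
  have "(1 - e) * h x \<le> h x" "(1 - e) * ((1 - e) * h x) \<le> (1 - e) * h x"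
    using e h(3) by (auto intro!: mult_left_le_one_le)
  then have "m \<le> c * x" using hx(1) unfolding m_def by linarith
  then have "exp (- c * x) \<le> exp (- m)" by simp
  with p(2) q_bound have "p \<le> 2 * exp (- m)" by linarith
  then have "ln p \<le> ln 2 - m" using p(1) by (simp add: ln_le_cancel_iff[symmetric] ln_mult_pos)
  moreover have "m - e * h x = (1 - 3 * e) * h x + e * (e * h x)" by (simp add: m_def algebra_simps)
  moreover have "0 \<le> e * (e * h x)" using e h(3) by simp
  ultimately show ?thesis using hx(2) by linarith
qed

text \<open>If FS dominates a multiple of FY at a slightly
  stretched argument, then R_S(x) \<le> (1 + \<epsilon>) h(x) whenever R_Y((1+e)x) is close to its liminf,
  which happens for arbitrarily large x.\<close>
lemma scale_transfer_upper:
  fixes FS FY h :: "real \<Rightarrow> real"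
  assumes h: "concave_on {0..} h" "h 0 = 0" "filterlim h at_top at_top"
    and Y_scale: "Liminf at_top (\<lambda>x. ereal (- ln (FY x) / h x)) = 1"
    and FY_pos: "\<And>x. 0 < FY x"
    and lower: "\<And>e. e > 0 \<Longrightarrow> \<exists>c>0. \<forall>x\<ge>0. c * FY ((1 + e) * x) \<le> FS x"
    and \<epsilon>: "\<epsilon> > 0"
  shows "frequently (\<lambda>x. - ln (FS x) / h x < 1 + \<epsilon>) at_top"
proof -
  define e where "e = min 1 (\<epsilon> / 4)"
  have e: "0 < e" "e \<le> 1" "e \<le> \<epsilon> / 4" using \<epsilon> by (auto simp: e_def)
  obtain c where c: "c > 0" "\<And>x. x \<ge> 0 \<Longrightarrow> c * FY ((1 + e) * x) \<le> FS x"
    using lower[OF e(1)] by blast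
  have freq: "frequently (\<lambda>x. - ln (FY ((1 + e) * x)) / h ((1 + e) * x) < 1 + e) at_top"
  proof (rule frequently_compose_filterlim)
    have inv: "(1 + e) * (inverse (1 + e) * y) = y" for y using e by (simp add: field_simps)
    show "frequently (\<lambda>y. - ln (FY ((1 + e) * (inverse (1 + e) * y))) / h ((1 + e) * (inverse (1 + e) * y))
        < 1 + e) at_top"
      unfolding inv by (rule Liminf_eq_1_frequently_below[OF Y_scale e(1)])
    show "filterlim (\<lambda>y. inverse (1 + e) * y) at_top at_top" using e by (intro filterlim_at_top_cmult) simp
  qed
  have large: "eventually (\<lambda>x. max 1 (- ln c / e) \<le> h x) at_top"
    using h(3) unfolding filterlim_at_top by blast
  have "eventually (\<lambda>x. 0 \<le> x \<and> 1 \<le> h ((1 + e) * x) \<and> max 1 (- ln c / e) \<le> h x) at_top"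
  proof -
    have "filterlim (\<lambda>x. (1 + e) * x) at_top at_top" using e by (intro filterlim_at_top_cmult) simp
    from eventually_compose_filterlim[OF large this]
    show ?thesis using eventually_ge_at_top[of 0] large by eventually_elim auto
  qed
  with freq show ?thesis
  proof (rule frequently_eventually_frequently[THEN frequently_elim1], elim conjE)
    fix x assume RY: "- ln (FY ((1 + e) * x)) / h ((1 + e) * x) < 1 + e"
      and x: "0 \<le> x" "1 \<le> h ((1 + e) * x)" and hx: "max 1 (- ln c / e) \<le> h x"
    have "- ln c / e \<le> h x" using hx by (rule order_trans[OF max.cobounded2])
    with e(1) have "- ln c \<le> e * h x" by (simp add: pos_divide_le_eq mult.commute del: divide_minus_left)
    moreover have "- ln (FY ((1 + e) * x)) < (1 + e) * h ((1 + e) * x)"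
      using RY x by (simp add: pos_divide_less_eq[symmetric] del: divide_minus_left)
    ultimately have "- ln (FS x) < (1 + 4 * e) * h x"
      using h(1,2) hx e x c FY_pos by (intro tail_exponent_upper_step) auto
    also have "\<dots> \<le> (1 + \<epsilon>) * h x" using e hx by (intro mult_right_mono) auto
    finally show "- ln (FS x) / h x < 1 + \<epsilon>"
      using hx by (simp add: pos_divide_less_eq del: divide_minus_left)
  qed
qed

lemma scale_transfer_lower:
  fixes FS FY h :: "real \<Rightarrow> real"
  assumes h: "concave_on {0..} h" "h 0 = 0" "filterlim h at_top at_top"
    and sublinear: "\<And>c. c > 0 \<Longrightarrow> eventually (\<lambda>x. h x \<le> c * x) at_top"
    and Y_scale: "Liminf at_top (\<lambda>x. ereal (- ln (FY x) / h x)) = 1"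
    and FY_nonneg: "\<And>x. 0 \<le> FY x" and FS_pos: "\<And>x. 0 \<le> x \<Longrightarrow> 0 < FS x"
    and upper: "\<And>e. 0 < e \<Longrightarrow> e < 1 \<Longrightarrow>
      \<exists>c>0. eventually (\<lambda>x. FS x \<le> FY ((1 - e) * x) + exp (- c * x)) at_top"
    and \<epsilon>: "\<epsilon> > 0"
  shows "eventually (\<lambda>x. 1 - \<epsilon> < - ln (FS x) / h x) at_top"
proof -
  define e where "e = min (1/2) (\<epsilon> / 4)"
  have e: "0 < e" "e \<le> 1/2" "e \<le> \<epsilon> / 4" using \<epsilon> by (auto simp: e_def)
  obtain c where c: "c > 0" "eventually (\<lambda>x. FS x \<le> FY ((1 - e) * x) + exp (- c * x)) at_top"
    using upper[OF e(1)] e(2) by auto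
  have "eventually (\<lambda>y. 1 - e < - ln (FY y) / h y) at_top"
    by (rule Liminf_eq_1_eventually_above[OF Y_scale e(1)])
  moreover have "eventually (\<lambda>y. 1 \<le> h y) at_top" using h(3) by (simp add: filterlim_at_top)
  ultimately have "eventually (\<lambda>y. (1 - e) * h y < - ln (FY y)) at_top"
    by eventually_elim (simp add: pos_less_divide_eq[symmetric] del: divide_minus_left)
  then have RY: "eventually (\<lambda>x. (1 - e) * h ((1 - e) * x) < - ln (FY ((1 - e) * x))) at_top"
    using e by (intro eventually_compose_filterlim[OF _ filterlim_at_top_cmult]) auto
  have hx: "eventually (\<lambda>x. max 1 (ln 2 / e) \<le> h x) at_top"
    using h(3) unfolding filterlim_at_top by blast
  show ?thesis
    using RY hx c(2) sublinear[OF c(1)] eventually_ge_at_top[of 0]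
  proof eventually_elim
    case (elim x)
    have "1 \<le> h x" "ln 2 \<le> e * h x" using elim(2) e(1) by (auto simp: divide_le_eq mult.commute)
    then have "(1 - 3 * e) * h x \<le> - ln (FS x)"
      using h(1,2) e elim FY_nonneg FS_pos by (intro tail_exponent_lower_step) auto
    moreover have "(1 - \<epsilon>) * h x < (1 - 3 * e) * h x"
      using e \<epsilon> \<open>1 \<le> h x\<close> by (intro mult_strict_right_mono) auto
    ultimately have "(1 - \<epsilon>) * h x < - ln (FS x)" by linarith
    then show ?case using \<open>1 \<le> h x\<close> by (simp add: pos_less_divide_eq del: divide_minus_left)
  qed
qed

lemma scale_transfer:
  fixes FS FY h :: "real \<Rightarrow> real"
  assumes h: "concave_on {0..} h" "h 0 = 0" "filterlim h at_top at_top"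
    and sublinear: "\<And>c. c > 0 \<Longrightarrow> eventually (\<lambda>x. h x \<le> c * x) at_top"
    and Y_scale: "Liminf at_top (\<lambda>x. ereal (- ln (FY x) / h x)) = 1"
    and FY_pos: "\<And>x. 0 < FY x"
    and lower: "\<And>e. e > 0 \<Longrightarrow> \<exists>c>0. \<forall>x\<ge>0. c * FY ((1 + e) * x) \<le> FS x"
    and upper: "\<And>e. 0 < e \<Longrightarrow> e < 1 \<Longrightarrow>
      \<exists>c>0. eventually (\<lambda>x. FS x \<le> FY ((1 - e) * x) + exp (- c * x)) at_top"
  shows "Liminf at_top (\<lambda>x. ereal (- ln (FS x) / h x)) = 1"
proof -
  obtain c where c: "c > 0" "\<And>x. x \<ge> 0 \<Longrightarrow> c * FY ((1 + 1) * x) \<le> FS x"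
    using lower[of 1] by auto
  have FS_pos: "0 < FS x" if "0 \<le> x" for x
    using c(2)[OF that] mult_pos_pos[OF c(1) FY_pos[of "(1 + 1) * x"]] by linarith
  show ?thesis
  proof (rule Liminf_eq_1I)
    show "eventually (\<lambda>x. 1 - \<epsilon> < - ln (FS x) / h x) at_top" if "0 < \<epsilon>" for \<epsilon>
      using scale_transfer_lower[OF h sublinear Y_scale _ FS_pos upper that] FY_pos by (simp add: less_imp_le)
    show "frequently (\<lambda>x. - ln (FS x) / h x < 1 + \<epsilon>) at_top" if "0 < \<epsilon>" for \<epsilon>
      using scale_transfer_upper[OF h Y_scale FY_pos lower that] .
  qed
qed

lemma natural_scaleD:
  assumes "natural_scale M Y h"
  shows "heavy_tailed M Y" "concave_on {0..} h" "h 0 = 0" "\<And>x. 0 \<le> x \<Longrightarrow> 0 \<le> h x"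
    "filterlim h at_top at_top"
    "Liminf at_top (\<lambda>x. ereal (tail_exponent M Y x / h x)) = 1"
  using assms unfolding natural_scale_def by auto

context prob_space
begin

text \<open>A natural scale h of a heavy-tailed variable is sublinear.  Otherwise, by concavity,
  h(x) \<ge> c x for all x > 0, so the tail would decay exponentially and exp(c Y / 4) would be
  integrable.\<close>
lemma natural_scale_sublinear:
  assumes [measurable]: "Y \<in> borel_measurable M" and scale: "natural_scale M Y h" and c: "c > 0"
  shows "eventually (\<lambda>x. h x \<le> c * x) at_top"
proof (rule ccontr)
  assume "\<not> eventually (\<lambda>x. h x \<le> c * x) at_top"
  then have "frequently (\<lambda>x. c * x < h x) at_top" by (simp add: not_eventually not_le)
  then have linear: "c * x \<le> h x" if "0 < x" for x
    using natural_scaleD(2,3)[OF scale] that by (intro concave_scale_linear_lower)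
  have "eventually (\<lambda>x. 1 - 1/2 < tail_exponent M Y x / h x) at_top"
    by (rule Liminf_eq_1_eventually_above[OF natural_scaleD(6)[OF scale]]) simp
  moreover have "eventually (\<lambda>x. 1 \<le> h x) at_top"
    using natural_scaleD(5)[OF scale] unfolding filterlim_at_top by blast
  moreover have "eventually (\<lambda>x::real. 0 < x) at_top" by simp
  ultimately have "eventually (\<lambda>x. 1 - 1/2 < tail_exponent M Y x / h x \<and> 1 \<le> h x \<and> 0 < x) at_top"
    by eventually_elim blast
  then have "eventually (\<lambda>x. prob {\<omega> \<in> space M. Y \<omega> > x} \<le> exp (- 2 * (c / 4) * x)) at_top"
  proof (rule eventually_mono, elim conjE)
    fix x assume R: "1 - 1/2 < tail_exponent M Y x / h x" and hx: "1 \<le> h x" and x: "0 < x"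
    have "2 * (c / 4) * x < tail_exponent M Y x"
      using R hx linear[OF x] by (simp add: less_divide_eq)
    then show "prob {\<omega> \<in> space M. Y \<omega> > x} \<le> exp (- 2 * (c / 4) * x)"
      by (rule tail_le_exp_of_exponent[THEN order_trans]) simp
  qed
  then have "(\<integral>\<^sup>+\<omega>. ennreal (exp ((c / 4) * Y \<omega>)) \<partial>M) < \<infinity>"
    using c by (intro exp_tail_imp_finite_mgf) auto
  moreover have "\<forall>s>0. (\<integral>\<^sup>+\<omega>. ennreal (exp (s * Y \<omega>)) \<partial>M) = \<infinity>"
    using natural_scaleD(1)[OF scale] unfolding heavy_tailed_def .
  ultimately show False by (auto elim!: allE[of _ "c / 4"] simp: c)
qed

text \<open>Conversely, a random variable whose tail exponent has a sublinear natural scale is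
  heavy-tailed: a finite exponential moment of order s would force R(x) \<ge> s x - O(1) \<ge> 3 h(x)
  for large x, contradicting liminf R/h = 1.\<close>
lemma heavy_of_sublinear_scale:
  assumes [measurable]: "Y \<in> borel_measurable M"
    and scale: "Liminf at_top (\<lambda>x. ereal (tail_exponent M Y x / h x)) = 1"
    and h_top: "filterlim h at_top at_top"
    and sublinear: "\<And>c. c > 0 \<Longrightarrow> eventually (\<lambda>x. h x \<le> c * x) at_top"
  shows "heavy_tailed M Y"
  unfolding heavy_tailed_def
proof (intro allI impI)
  fix s :: real assume s: "s > 0"
  show "(\<integral>\<^sup>+\<omega>. ennreal (exp (s * Y \<omega>)) \<partial>M) = \<infinity>"
  proof (rule ccontr)
    assume "(\<integral>\<^sup>+\<omega>. ennreal (exp (s * Y \<omega>)) \<partial>M) \<noteq> \<infinity>"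
    then obtain C where C: "(\<integral>\<^sup>+\<omega>. ennreal (exp (s * Y \<omega>)) \<partial>M) = ennreal C" "0 \<le> C"
      by (cases "(\<integral>\<^sup>+\<omega>. ennreal (exp (s * Y \<omega>)) \<partial>M)" rule: ennreal_cases) auto
    have freq: "frequently (\<lambda>x. tail_exponent M Y x / h x < 1 + 1/2) at_top"
      by (rule Liminf_eq_1_frequently_below[OF scale]) simp
    have "eventually (\<lambda>x. 1 - 1/2 < tail_exponent M Y x / h x) at_top"
      by (rule Liminf_eq_1_eventually_above[OF scale]) simp
    moreover have "eventually (\<lambda>x. 1 \<le> h x) at_top" using h_top unfolding filterlim_at_top by blast
    moreover have "eventually (\<lambda>x. h x \<le> s / 4 * x) at_top" using s by (intro sublinear) simp
    moreover have "eventually (\<lambda>x. 4 / s * ln C \<le> x) at_top" by (rule eventually_ge_at_top)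
    ultimately have "eventually (\<lambda>x. 1 - 1/2 < tail_exponent M Y x / h x \<and> 1 \<le> h x
        \<and> h x \<le> s / 4 * x \<and> 4 / s * ln C \<le> x) at_top"
      by eventually_elim blast
    with freq have "frequently (\<lambda>x. tail_exponent M Y x / h x < 1 + 1/2 \<and>
        1 - 1/2 < tail_exponent M Y x / h x \<and> 1 \<le> h x \<and> h x \<le> s / 4 * x \<and> 4 / s * ln C \<le> x) at_top"
      by (rule frequently_eventually_frequently)
    then have "frequently (\<lambda>x::real. False) at_top"
    proof (rule frequently_elim1, elim conjE)
      fix x assume upper: "tail_exponent M Y x / h x < 1 + 1/2"
        and lower: "1 - 1/2 < tail_exponent M Y x / h x" and hx: "1 \<le> h x" "h x \<le> s / 4 * x"
        and x: "4 / s * ln C \<le> x"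
      have "0 < tail_exponent M Y x" using lower hx by (simp add: less_divide_eq)
      then have "s * x - ln C \<le> tail_exponent M Y x"
        by (rule tail_exponent_ge_of_mgf[OF assms(1) s C])
      then have "3 * h x \<le> tail_exponent M Y x"
        using hx x s by (simp add: field_simps)
      with upper hx show False by (simp add: divide_less_eq)
    qed
    then show False by simp
  qed
qed

end

lemma linear_times_exp_decay:
  fixes c m :: real
  assumes "0 < c" "0 < m"
  shows "eventually (\<lambda>x. x / m * exp (- c * x) \<le> exp (- (c / 2) * x)) at_top"
  using assms by real_asymp

locale compound_sum = prob_space M
  for M :: "'a measure" +
  fixes X :: "'a \<Rightarrow> real" and Xs :: "nat \<Rightarrow> 'a \<Rightarrow> real" and N :: "'a \<Rightarrow> nat"
  assumes X_meas[measurable]: "X \<in> borel_measurable M"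
    and X_light: "light_tailed M X"
    and X_int: "integrable M X"
    and mean_pos: "expectation X > 0"
    and Xs_meas: "\<And>i. i \<ge> 1 \<Longrightarrow> Xs i \<in> borel_measurable M"
    and Xs_distr: "\<And>i. i \<ge> 1 \<Longrightarrow> distr M borel (Xs i) = distr M borel X"
    and Xs_indep: "indep_vars (\<lambda>_. borel) Xs {1..}"
    and N_meas[measurable]: "N \<in> measurable M (count_space UNIV)"
    and N_pos: "\<And>\<omega>. \<omega> \<in> space M \<Longrightarrow> N \<omega> \<ge> 1"
    and N_indep: "indep_set
           (sigma_sets (space M) {N -` A \<inter> space M | A. A \<in> sets (count_space UNIV)})
           (sigma_sets (space M) (\<Union>i\<in>{1..}. {Xs i -` A \<inter> space M | A. A \<in> sets borel}))"
begin

abbreviation mu :: real where "mu \<equiv> expectation X"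

definition partial_sum :: "nat \<Rightarrow> 'a \<Rightarrow> real" where
  "partial_sum n \<omega> = (\<Sum>k\<in>{1..n}. Xs k \<omega>)"

definition compound :: "'a \<Rightarrow> real" where
  "compound \<omega> = partial_sum (N \<omega>) \<omega>"

lemma partial_sum_measurable[measurable]: "partial_sum n \<in> borel_measurable M"
  unfolding partial_sum_def by (intro borel_measurable_sum) (auto intro: Xs_meas)

lemma compound_measurable[measurable]: "compound \<in> borel_measurable M"
proof -
  have "(\<lambda>\<omega>. partial_sum (N \<omega>) \<omega>) \<in> borel_measurable M"
    by (rule measurable_compose_countable[OF partial_sum_measurable N_meas])
  then show ?thesis by (simp add: compound_def[abs_def])
qed

lemma Xs_integral_eq:
  fixes g :: "real \<Rightarrow> real"
  assumes "i \<ge> 1" "g \<in> borel_measurable borel"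
  shows "(\<integral>\<omega>. g (Xs i \<omega>) \<partial>M) = (\<integral>\<omega>. g (X \<omega>) \<partial>M)"
  using integral_distr[OF Xs_meas[OF assms(1)] assms(2)] integral_distr[OF X_meas assms(2)]
  by (simp add: Xs_distr[OF assms(1)])

lemma Xs_integrable_iff:
  fixes g :: "real \<Rightarrow> real"
  assumes "i \<ge> 1" "g \<in> borel_measurable borel"
  shows "integrable M (\<lambda>\<omega>. g (Xs i \<omega>)) \<longleftrightarrow> integrable M (\<lambda>\<omega>. g (X \<omega>))"
  using integrable_distr_eq[OF Xs_meas[OF assms(1)] assms(2)] integrable_distr_eq[OF X_meas assms(2)]
  by (simp add: Xs_distr[OF assms(1)])

lemma Xs_nn_integral_eq:
  assumes "i \<ge> 1" "g \<in> borel_measurable borel"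
  shows "(\<integral>\<^sup>+\<omega>. g (Xs i \<omega>) \<partial>M) = (\<integral>\<^sup>+\<omega>. g (X \<omega>) \<partial>M)"
proof -
  have "(\<integral>\<^sup>+\<omega>. g (Xs i \<omega>) \<partial>M) = integral\<^sup>N (distr M borel (Xs i)) g"
    by (rule nn_integral_distr[symmetric]) (use assms Xs_meas in auto)
  also have "\<dots> = integral\<^sup>N (distr M borel X) g" using Xs_distr[OF assms(1)] by simp
  also have "\<dots> = (\<integral>\<^sup>+\<omega>. g (X \<omega>) \<partial>M)" by (rule nn_integral_distr) (use assms in auto)
  finally show ?thesis .
qed

lemma partial_sum_tail_lower:
  assumes a: "0 \<le> a" "a < mu"
  obtains c where "0 < c" "\<And>n. 1 \<le> n \<Longrightarrow> c \<le> prob {\<omega> \<in> space M. real n * a < partial_sum n \<omega>}"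
proof -
  define C where "C = expectation (\<lambda>\<omega>. (max 0 (X \<omega>))\<^sup>2) + 1"
  have "0 \<le> expectation (\<lambda>\<omega>. (max 0 (X \<omega>))\<^sup>2)" by (rule integral_nonneg_AE) auto
  then have C: "0 < C" unfolding C_def by linarith
  have pos: "0 < (mu - a)\<^sup>2 / C" using a C by simp
  have bound: "(mu - a)\<^sup>2 / C \<le> prob {\<omega> \<in> space M. real n * a < partial_sum n \<omega>}" if "1 \<le> n" for n
  proof -
    have "(mu - a)\<^sup>2 / C \<le> prob {\<omega> \<in> space M. real (card {1..n}) * a < (\<Sum>k\<in>{1..n}. Xs k \<omega>)}"
    proof (rule sum_exceeds_fraction_of_mean)
      fix k assume k: "k \<in> {1..n}"
      then show "integrable M (Xs k)"
        using Xs_integrable_iff[of k "\<lambda>x. x"] X_int by simp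
      show "integrable M (\<lambda>\<omega>. (max 0 (Xs k \<omega>))\<^sup>2)"
        using k Xs_integrable_iff[of k "\<lambda>x. (max 0 x)\<^sup>2"]
          light_tailed_pos_part_square_integrable[OF X_meas X_light] by simp
      show "mu \<le> expectation (Xs k)" using k Xs_integral_eq[of k "\<lambda>x. x"] by simp
      show "expectation (\<lambda>\<omega>. (max 0 (Xs k \<omega>))\<^sup>2) \<le> C"
        using k Xs_integral_eq[of k "\<lambda>x. (max 0 x)\<^sup>2"] by (simp add: C_def)
    qed (use that a in auto)
    then show ?thesis by (simp add: partial_sum_def)
  qed
  show ?thesis by (rule that[OF pos bound])
qed

lemma partial_sum_chernoff:
  assumes b: "mu < b"
  obtains s where "0 < s"
    "\<And>n x. prob {\<omega> \<in> space M. x < partial_sum n \<omega>} \<le> exp (- s * x + real n * (s * b))"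
proof -
  obtain s where s: "s > 0" "integrable M (\<lambda>\<omega>. exp (s * X \<omega>))"
      "expectation (\<lambda>\<omega>. exp (s * X \<omega>)) \<le> exp (s * b)"
    by (rule light_tailed_mgf_below[OF X_meas X_light X_int b])
  have factor: "(\<integral>\<^sup>+\<omega>. ennreal (exp (s * Xs i \<omega>)) \<partial>M) \<le> ennreal (exp (s * b))" if "i \<in> {1..n}" for i n
  proof -
    have "(\<integral>\<^sup>+\<omega>. ennreal (exp (s * Xs i \<omega>)) \<partial>M) = (\<integral>\<^sup>+\<omega>. ennreal (exp (s * X \<omega>)) \<partial>M)"
      using that Xs_nn_integral_eq[of i "\<lambda>x. ennreal (exp (s * x))"] by simp
    also have "\<dots> = ennreal (expectation (\<lambda>\<omega>. exp (s * X \<omega>)))"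
      by (rule nn_integral_eq_integral[OF s(2)]) auto
    finally show ?thesis using s(3) by simp
  qed
  show ?thesis
  proof (rule that[OF s(1)])
    fix n :: nat and x :: real
    have "emeasure M {\<omega> \<in> space M. x < partial_sum n \<omega>}
        \<le> ennreal (exp (- s * x)) * (\<Prod>i\<in>{1..n}. \<integral>\<^sup>+\<omega>. ennreal (exp (s * Xs i \<omega>)) \<partial>M)"
      unfolding partial_sum_def
      by (intro indep_sum_chernoff s(1) indep_vars_subset[OF Xs_indep]) auto
    also have "\<dots> \<le> ennreal (exp (- s * x)) * (\<Prod>i\<in>{1..n}. ennreal (exp (s * b)))"
      by (intro mult_left_mono prod_mono_ennreal factor) auto
    also have "\<dots> = ennreal (exp (- s * x + real n * (s * b)))"
      unfolding exp_add exp_of_nat_mult by (simp add: ennreal_power ennreal_mult)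
    finally show "prob {\<omega> \<in> space M. x < partial_sum n \<omega>} \<le> exp (- s * x + real n * (s * b))"
      by (simp add: emeasure_eq_measure)
  qed
qed

lemma partial_sum_event_in_sigma:
  "{\<omega> \<in> space M. x < partial_sum n \<omega>}
    \<in> sigma_sets (space M) (\<Union>i\<in>{1..}. {Xs i -` A \<inter> space M | A. A \<in> sets borel})"
  (is "_ \<in> sigma_sets _ ?G")
proof -
  have G: "?G \<subseteq> Pow (space M)" by auto
  have sp: "space (sigma (space M) ?G) = space M" using G by (rule space_measure_of)
  have st: "sets (sigma (space M) ?G) = sigma_sets (space M) ?G" using G by (rule sets_measure_of)
  have "Xs i \<in> borel_measurable (sigma (space M) ?G)" if "i \<in> {1..n}" for i
  proof (rule measurableI)
    fix A :: "real set" assume "A \<in> sets borel"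
    then have "Xs i -` A \<inter> space M \<in> ?G" using that by auto
    then show "Xs i -` A \<inter> space (sigma (space M) ?G) \<in> sets (sigma (space M) ?G)"
      unfolding sp st by (rule sigma_sets.Basic)
  qed simp
  then have "partial_sum n \<in> borel_measurable (sigma (space M) ?G)"
    unfolding partial_sum_def[abs_def] by (rule borel_measurable_sum)
  then have "partial_sum n -` {x<..} \<inter> space (sigma (space M) ?G) \<in> sets (sigma (space M) ?G)"
    by (rule measurable_sets) simp
  moreover have "partial_sum n -` {x<..} \<inter> space (sigma (space M) ?G) = {\<omega> \<in> space M. x < partial_sum n \<omega>}"
    unfolding sp by auto
  ultimately show ?thesis unfolding st by simp
qed

lemma compound_tail_decomposition:
  "(\<lambda>n. prob {\<omega> \<in> space M. N \<omega> = n} * prob {\<omega> \<in> space M. x < partial_sum n \<omega>})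
    sums prob {\<omega> \<in> space M. x < compound \<omega>}"
proof -
  define B where "B n = {\<omega> \<in> space M. N \<omega> = n \<and> x < partial_sum n \<omega>}" for n
  have "(\<lambda>n. prob (B n)) sums prob (\<Union>n. B n)"
    by (rule finite_measure_UNION) (auto simp: B_def disjoint_family_on_def)
  moreover have "(\<Union>n. B n) = {\<omega> \<in> space M. x < compound \<omega>}" by (auto simp: B_def compound_def)
  moreover have "prob (B n) = prob {\<omega> \<in> space M. N \<omega> = n} * prob {\<omega> \<in> space M. x < partial_sum n \<omega>}" for n
  proof -
    have "{\<omega> \<in> space M. N \<omega> = n} = N -` {n} \<inter> space M" by auto
    then have "{\<omega> \<in> space M. N \<omega> = n}
        \<in> sigma_sets (space M) {N -` A \<inter> space M | A. A \<in> sets (count_space UNIV)}"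
      by (intro sigma_sets.Basic) auto
    from indep_setD[OF N_indep this partial_sum_event_in_sigma]
    have "prob ({\<omega> \<in> space M. N \<omega> = n} \<inter> {\<omega> \<in> space M. x < partial_sum n \<omega>})
        = prob {\<omega> \<in> space M. N \<omega> = n} * prob {\<omega> \<in> space M. x < partial_sum n \<omega>}" .
    moreover have "B n = {\<omega> \<in> space M. N \<omega> = n} \<inter> {\<omega> \<in> space M. x < partial_sum n \<omega>}"
      by (auto simp: B_def)
    ultimately show ?thesis by simp
  qed
  ultimately show ?thesis by simp
qed

lemma compound_tail_ge_large_counts:
  assumes large: "\<And>n. m \<le> n \<Longrightarrow> 1 \<le> n \<Longrightarrow> c \<le> prob {\<omega> \<in> space M. x < partial_sum n \<omega>}"
  shows "c * prob {\<omega> \<in> space M. m \<le> N \<omega>} \<le> prob {\<omega> \<in> space M. x < compound \<omega>}"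
proof -
  define D where "D n = {\<omega> \<in> space M. N \<omega> = n \<and> m \<le> n}" for n
  have "(\<lambda>n. c * prob (D n)) sums (c * prob (\<Union>n. D n))"
    by (intro sums_mult finite_measure_UNION) (auto simp: D_def disjoint_family_on_def)
  moreover note compound_tail_decomposition[of x]
  moreover have "c * prob (D n) \<le> prob {\<omega> \<in> space M. N \<omega> = n} * prob {\<omega> \<in> space M. x < partial_sum n \<omega>}"
    for n
  proof (cases "m \<le> n \<and> 1 \<le> n")
    case True
    then have "D n = {\<omega> \<in> space M. N \<omega> = n}" by (auto simp: D_def)
    with large[of n] True show ?thesis
      using mult_right_mono[of c "prob {\<omega> \<in> space M. x < partial_sum n \<omega>}" "prob {\<omega> \<in> space M. N \<omega> = n}"]
      by (simp add: mult.commute)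
  next
    case False
    then have "D n = {}" using N_pos by (auto simp: D_def)
    then show ?thesis by simp
  qed
  ultimately have "c * prob (\<Union>n. D n) \<le> prob {\<omega> \<in> space M. x < compound \<omega>}"
    by (rule sums_le[rotated])
  moreover have "(\<Union>n. D n) = {\<omega> \<in> space M. m \<le> N \<omega>}" by (auto simp: D_def)
  ultimately show ?thesis by simp
qed

text \<open>Lower tail comparison: P(S > x) \<ge> c P(mu N > (1+e) x).  If mu N > (1+e) x then
  N \<ge> x / a with a = mu / (1+e) < mu, and each T_n with n a \<ge> x exceeds x with probability at
  least c.\<close>
lemma compound_tail_lower:
  assumes e: "0 < e"
  shows "\<exists>c>0. \<forall>x\<ge>0.
    c * prob {\<omega> \<in> space M. mu * real (N \<omega>) > (1 + e) * x} \<le> prob {\<omega> \<in> space M. compound \<omega> > x}"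
proof -
  define a where "a = mu / (1 + e)"
  have a: "0 < a" "a < mu" using mean_pos e by (auto simp: a_def field_simps)
  obtain c where c: "0 < c" "\<And>n. 1 \<le> n \<Longrightarrow> c \<le> prob {\<omega> \<in> space M. real n * a < partial_sum n \<omega>}"
    using partial_sum_tail_lower[of a] a by auto
  have "c * prob {\<omega> \<in> space M. mu * real (N \<omega>) > (1 + e) * x} \<le> prob {\<omega> \<in> space M. compound \<omega> > x}"
    if x: "0 \<le> x" for x
  proof -
    define m where "m = nat \<lceil>x / a\<rceil>"
    have "c \<le> prob {\<omega> \<in> space M. x < partial_sum n \<omega>}" if n: "m \<le> n" "1 \<le> n" for n
    proof -
      have "x / a \<le> real n" using n(1) unfolding m_def by linarith
      then have "x \<le> real n * a" using a(1) by (simp add: divide_le_eq)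
      then have "prob {\<omega> \<in> space M. real n * a < partial_sum n \<omega>} \<le> prob {\<omega> \<in> space M. x < partial_sum n \<omega>}"
        by (intro finite_measure_mono) auto
      with c(2)[OF n(2)] show ?thesis by linarith
    qed
    then have conditioned: "c * prob {\<omega> \<in> space M. m \<le> N \<omega>} \<le> prob {\<omega> \<in> space M. x < compound \<omega>}"
      by (rule compound_tail_ge_large_counts)
    have "prob {\<omega> \<in> space M. mu * real (N \<omega>) > (1 + e) * x} \<le> prob {\<omega> \<in> space M. m \<le> N \<omega>}"
    proof (rule finite_measure_mono)
      show "{\<omega> \<in> space M. mu * real (N \<omega>) > (1 + e) * x} \<subseteq> {\<omega> \<in> space M. m \<le> N \<omega>}"
      proof safe
        fix \<omega> assume "\<omega> \<in> space M" "mu * real (N \<omega>) > (1 + e) * x"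
        then have "x / a < real (N \<omega>)" using e mean_pos by (simp add: a_def field_simps)
        then show "m \<le> N \<omega>" unfolding m_def by linarith
      qed
    qed simp
    then have "c * prob {\<omega> \<in> space M. mu * real (N \<omega>) > (1 + e) * x} \<le> c * prob {\<omega> \<in> space M. m \<le> N \<omega>}"
      using c(1) by (simp add: mult_left_mono)
    then show ?thesis using conditioned by (rule order_trans)
  qed
  with c(1) show ?thesis by blast
qed

text \<open>Union bound: if mu N \<le> (1-e) x, then S > x forces some partial sum T_n with
  n \<le> (1-e) x / mu to exceed x.  With Chernoff's bound at rate b = mu (1+e) each such event has
  probability at most exp(-s e^2 x), and there are at most x / mu of them.\<close>
lemma compound_tail_union_bound:
  assumes e: "0 < e" "e < 1" and x: "0 \<le> x"
    and chernoff: "\<And>n. prob {\<omega> \<in> space M. x < partial_sum n \<omega>} \<le> exp (- s * x + real n * (s * (mu * (1 + e))))"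
    and s: "0 < s"
  shows "prob {\<omega> \<in> space M. compound \<omega> > x}
    \<le> prob {\<omega> \<in> space M. mu * real (N \<omega>) > (1 - e) * x} + x / mu * exp (- (s * e\<^sup>2) * x)"
proof -
  define K where "K = nat \<lfloor>(1 - e) * x / mu\<rfloor>"
  have "0 \<le> (1 - e) * x / mu" using e x mean_pos by simp
  then have K: "real K \<le> (1 - e) * x / mu" unfolding K_def by linarith
  also have "\<dots> \<le> x / mu" using e x mean_pos by (simp add: divide_right_mono mult_left_le_one_le)
  finally have K_le: "real K \<le> x / mu" .
  define A where "A = {\<omega> \<in> space M. mu * real (N \<omega>) > (1 - e) * x}"
  define F where "F n = {\<omega> \<in> space M. x < partial_sum n \<omega>}" for n
  have F: "prob (F n) \<le> exp (- (s * e\<^sup>2) * x)" if "n \<in> {1..K}" for n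
  proof -
    have "real n * (s * (mu * (1 + e))) \<le> (1 - e) * x / mu * (s * (mu * (1 + e)))"
      using that K s e mean_pos by (intro mult_right_mono) auto
    also have "\<dots> = s * x * (1 - e\<^sup>2)" using mean_pos by (simp add: field_simps power2_eq_square)
    finally have "exp (- s * x + real n * (s * (mu * (1 + e)))) \<le> exp (- (s * e\<^sup>2) * x)"
      by (simp add: algebra_simps)
    with chernoff[of n] show ?thesis unfolding F_def by (rule order_trans)
  qed
  have "{\<omega> \<in> space M. compound \<omega> > x} \<subseteq> A \<union> (\<Union>n\<in>{1..K}. F n)"
  proof
    fix \<omega> assume \<omega>: "\<omega> \<in> {\<omega> \<in> space M. compound \<omega> > x}"
    show "\<omega> \<in> A \<union> (\<Union>n\<in>{1..K}. F n)"
    proof (cases "\<omega> \<in> A")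
      case False
      then have "real (N \<omega>) \<le> (1 - e) * x / mu"
        using \<omega> mean_pos by (auto simp: A_def le_divide_eq mult.commute)
      then have "N \<omega> \<le> K" unfolding K_def by linarith
      with \<omega> N_pos[of \<omega>] show ?thesis by (auto simp: F_def compound_def)
    qed simp
  qed
  then have "prob {\<omega> \<in> space M. compound \<omega> > x} \<le> prob (A \<union> (\<Union>n\<in>{1..K}. F n))"
    by (intro finite_measure_mono) (auto simp: A_def F_def)
  also have "\<dots> \<le> prob A + (\<Sum>n\<in>{1..K}. prob (F n))"
    by (intro order_trans[OF measure_Un_le] add_left_mono measure_UNION_le) (auto simp: A_def F_def)
  also have "\<dots> \<le> prob A + real K * exp (- (s * e\<^sup>2) * x)"
    using sum_bounded_above[of "{1..K}" "\<lambda>n. prob (F n)" "exp (- (s * e\<^sup>2) * x)"] F by simp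
  also have "\<dots> \<le> prob A + x / mu * exp (- (s * e\<^sup>2) * x)"
    using K_le by (intro add_left_mono mult_right_mono) auto
  finally show ?thesis unfolding A_def .
qed

text \<open>Upper tail comparison: P(S > x) \<le> P(mu N > (1-e) x) + exp(-c x) eventually; the linear
  factor x / mu of the union bound is absorbed by halving the exponential rate.\<close>
lemma compound_tail_upper:
  assumes e: "0 < e" "e < 1"
  shows "\<exists>c>0. eventually (\<lambda>x. prob {\<omega> \<in> space M. compound \<omega> > x}
      \<le> prob {\<omega> \<in> space M. mu * real (N \<omega>) > (1 - e) * x} + exp (- c * x)) at_top"
proof -
  obtain s where s: "0 < s"
    "\<And>n x. prob {\<omega> \<in> space M. x < partial_sum n \<omega>} \<le> exp (- s * x + real n * (s * (mu * (1 + e))))"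
    using partial_sum_chernoff[of "mu * (1 + e)"] e mean_pos by auto
  define c where "c = s * e\<^sup>2"
  have c: "0 < c" using s e by (simp add: c_def)
  have "eventually (\<lambda>x. x / mu * exp (- c * x) \<le> exp (- (c / 2) * x)) at_top"
    using linear_times_exp_decay[OF c mean_pos] .
  then have "eventually (\<lambda>x. prob {\<omega> \<in> space M. compound \<omega> > x}
      \<le> prob {\<omega> \<in> space M. mu * real (N \<omega>) > (1 - e) * x} + exp (- (c / 2) * x)) at_top"
    using eventually_ge_at_top[of 0]
    by eventually_elim (use compound_tail_union_bound[OF e _ s(2) s(1)] in \<open>fastforce simp: c_def\<close>)
  then show ?thesis using c by (intro exI[of _ "c / 2"]) auto
qed

theorem compound_natural_scale:
  assumes scale: "natural_scale M (\<lambda>\<omega>. mu * real (N \<omega>)) h"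
  shows "natural_scale M compound h"
proof -
  have Y_meas: "(\<lambda>\<omega>. mu * real (N \<omega>)) \<in> borel_measurable M" by measurable
  have sublinear: "\<And>c. 0 < c \<Longrightarrow> eventually (\<lambda>x. h x \<le> c * x) at_top"
    by (rule natural_scale_sublinear[OF Y_meas scale])
  have FY_pos: "\<And>x. 0 < prob {\<omega> \<in> space M. mu * real (N \<omega>) > x}"
    by (rule tail_pos_of_heavy[OF Y_meas natural_scaleD(1)[OF scale]])
  have Y_scale: "Liminf at_top (\<lambda>x. ereal (- ln (prob {\<omega> \<in> space M. mu * real (N \<omega>) > x}) / h x)) = 1"
    using natural_scaleD(6)[OF scale] unfolding tail_exponent_def .
  have "Liminf at_top (\<lambda>x. ereal (- ln (prob {\<omega> \<in> space M. compound \<omega> > x}) / h x)) = 1"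
    by (rule scale_transfer[OF natural_scaleD(2,3,5)[OF scale] sublinear Y_scale FY_pos
          compound_tail_lower compound_tail_upper])
  then have S_scale: "Liminf at_top (\<lambda>x. ereal (tail_exponent M compound x / h x)) = 1"
    unfolding tail_exponent_def .
  have "heavy_tailed M compound"
    by (rule heavy_of_sublinear_scale[OF compound_measurable S_scale natural_scaleD(5)[OF scale] sublinear])
  with S_scale natural_scaleD(2-5)[OF scale] show ?thesis unfolding natural_scale_def by blast
qed

end

theorem mainTheorem11:
  fixes M :: "'a measure" and X :: "'a \<Rightarrow> real" and Xs :: "nat \<Rightarrow> 'a \<Rightarrow> real"
    and N :: "'a \<Rightarrow> nat" and \<delta> :: real and h :: "real \<Rightarrow> real"
  assumes "prob_space M"
    and "X \<in> borel_measurable M"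
    and "light_tailed M X"
    and "integrable M X" and "prob_space.expectation M X > 0"
    and "\<And>i. i \<ge> 1 \<Longrightarrow> Xs i \<in> borel_measurable M"
    and "\<And>i. i \<ge> 1 \<Longrightarrow> distr M borel (Xs i) = distr M borel X"
    and "prob_space.indep_vars M (\<lambda>_. borel) Xs {1..}"
    and "N \<in> measurable M (count_space UNIV)"
    and "\<And>\<omega>. \<omega> \<in> space M \<Longrightarrow> N \<omega> \<ge> 1"
    and "heavy_tailed M (\<lambda>\<omega>. real (N \<omega>))"
    and "prob_space.indep_set M
           (sigma_sets (space M) {N -` A \<inter> space M | A. A \<in> sets (count_space UNIV)})
           (sigma_sets (space M) (\<Union>i\<in>{1..}. {Xs i -` A \<inter> space M | A. A \<in> sets borel}))"
    and "\<delta> > 0"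
    and "(\<integral>\<^sup>+ \<omega>. ennreal (real (N \<omega>) powr (1 + \<delta>)) \<partial>M) < \<infinity>"
    and "natural_scale M (\<lambda>\<omega>. prob_space.expectation M X * real (N \<omega>)) h"
    and "\<forall>\<^sub>F x in at_top. h x \<ge> (1 + \<delta>) * ln x"
  shows "natural_scale M (\<lambda>\<omega>. \<Sum>k\<in>{1..N \<omega>}. Xs k \<omega>) h"
proof -
  interpret prob_space M by (fact assms(1))
  interpret compound_sum M X Xs N by unfold_locales (fact assms)+
  have "(\<lambda>\<omega>. \<Sum>k\<in>{1..N \<omega>}. Xs k \<omega>) = compound"
    by (simp add: fun_eq_iff compound_def partial_sum_def)
  with compound_natural_scale[OF assms(15)] show ?thesis by simp
qed

end
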